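(* Let $\alpha:ca^+_Z\to\mathbb{R}\cup\{+\infty\}$ be such that $\inf_{\mu\in ca^+_Z}\alpha(\mu)\in\mathbb{R}$ and $\alpha(\mu)\ge\varphi(\langle Z,\mu\rangle)$ for all $\mu\in ca^+_Z$, for some function $\varphi:\mathbb{R}_+\to\mathbb{R}\cup\{+\infty\}$ with $\lim_{x\to+\infty}\varphi(x)/x=+\infty$. Then: (i) $\psi(X):=\sup_{\mu\in ca^+_Z}(\langle X,\mu\rangle-\alpha(\mu))$ defines an increasing convex functional $\psi:B_Z\to\mathbb{R}$; (ii) if all sublevel sets $\{\mu\in ca^+_Z:\alpha(\mu)\le a\}$, $a\in\mathbb{R}$, are relatively $\sigma(ca^+_Z,C_Z)$-compact, then $\psi(X_n)\downarrow\psi(X)$ for every sequence $(X_n)$ in $C_Z$ decreasing pointwise to some $X\in C_Z$; (iii) if all sublevel sets $\{\mu\in ca^+_Z:\alpha(\mu)\le a\}$, $a\in\mathbb{R}$, are $\sigma(ca^+_Z,C_Z)$-compact, then $\psi(X_n)\downarrow\psi(X)$ for every sequence $(X_n)$ in $C_Z$ decreasing pointwise to some $X\in U_Z$, and $\psi(X)=\max_{\mu\in ca^+_Z}(\langle X,\mu\rangle-\alpha(\mu))$ for all $X\in U_Z$.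
   Context: Fix integers $J\ge0$, $T\ge1$. $\Omega$ is a non-empty subset of $((0,\infty)\times\mathbb{R}^J)^T$ with the Euclidean metric. $Z:\Omega\to[1,\infty)$ is continuous with $\{\omega\in\Omega:Z(\omega)\le z\}$ compact for every $z\in\mathbb{R}_+$. $B_Z$ is the space of Borel measurable $X:\Omega\to\mathbb{R}$ with $X/Z$ bounded; $U_Z$ (resp. $C_Z$) is the set of upper semicontinuous (resp. continuous) elements of $B_Z$. $ca^+_Z$ is the set of (nonnegative) Borel measures $\mu$ on $\Omega$ with $\langle Z,\mu\rangle:=\int Z\,d\mu<\infty$; $\langle X,\mu\rangle=\int X\,d\mu$. $\sigma(ca^+_Z,C_Z)$ is the coarsest topology on $ca^+_Z$ making $\mu\mapsto\langle X,\mu\rangle$ continuous for all $X\in C_Z$. $\psi$ increasing means $\psi(X)\ge\psi(Y)$ whenever $X\ge Y$; $\downarrow$ denotes monotone decreasing convergence. *)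

theory Defs
  imports "HOL-Analysis.Analysis"
begin

text \<open>Points of \<Omega> live in ((0,\<infinity>) \<times> \<real>^J)^T, modelled as vectors of type real^'k^'t where
  'k has J+1 elements and one fixed coordinate k0 :: 'k is the positive one.
  The norm of real^'k^'t is the Euclidean norm on \<real>^(T(J+1)).\<close>

definition state_space :: "'k \<Rightarrow> (real^'k^'t) set" where
  "state_space k0 = {\<omega>. \<forall>t. \<omega> $ t $ k0 > 0}"

definition ca_Z :: "'a::topological_space set \<Rightarrow> ('a \<Rightarrow> real) \<Rightarrow> 'a measure set" where
  "ca_Z \<Omega> Z = {\<mu>. sets \<mu> = sets (restrict_space borel \<Omega>) \<and>
                    (\<integral>\<^sup>+ \<omega>. ennreal (Z \<omega>) \<partial>\<mu>) < \<infinity>}"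

definition B_Z :: "'a::topological_space set \<Rightarrow> ('a \<Rightarrow> real) \<Rightarrow> ('a \<Rightarrow> real) set" where
  "B_Z \<Omega> Z = {X. X \<in> borel_measurable (restrict_space borel \<Omega>) \<and>
                   (\<exists>c. \<forall>\<omega>\<in>\<Omega>. \<bar>X \<omega> / Z \<omega>\<bar> \<le> c)}"

definition usc_on :: "'a::topological_space set \<Rightarrow> ('a \<Rightarrow> real) \<Rightarrow> bool" where
  "usc_on \<Omega> X \<longleftrightarrow> (\<forall>a. openin (top_of_set \<Omega>) {\<omega>\<in>\<Omega>. X \<omega> < a})"

definition U_Z :: "'a::topological_space set \<Rightarrow> ('a \<Rightarrow> real) \<Rightarrow> ('a \<Rightarrow> real) set" where
  "U_Z \<Omega> Z = {X \<in> B_Z \<Omega> Z. usc_on \<Omega> X}"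

definition C_Z :: "'a::topological_space set \<Rightarrow> ('a \<Rightarrow> real) \<Rightarrow> ('a \<Rightarrow> real) set" where
  "C_Z \<Omega> Z = {X \<in> B_Z \<Omega> Z. continuous_on \<Omega> X}"

definition weak_top :: "'a::topological_space set \<Rightarrow> ('a \<Rightarrow> real) \<Rightarrow> 'a measure topology" where
  "weak_top \<Omega> Z = topology_generated_by
     {{\<mu> \<in> ca_Z \<Omega> Z. (\<integral>\<omega>. X \<omega> \<partial>\<mu>) \<in> U} | X U. X \<in> C_Z \<Omega> Z \<and> open U}"

definition psi :: "'a::topological_space set \<Rightarrow> ('a \<Rightarrow> real) \<Rightarrow> ('a measure \<Rightarrow> ereal)
                     \<Rightarrow> ('a \<Rightarrow> real) \<Rightarrow> ereal" where
  "psi \<Omega> Z \<alpha> X = (SUP \<mu>\<in>ca_Z \<Omega> Z. ereal (\<integral>\<omega>. X \<omega> \<partial>\<mu>) - \<alpha> \<mu>)"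

end

theory Submission
  imports Defs
begin

text \<open>Since \<alpha> grows superlinearly in the Z-mass \<open>\<langle>Z,\<mu>\<rangle>\<close> while \<open>\<langle>X,\<mu>\<rangle>\<close> grows at most linearly in it
  for \<open>X \<in> B_Z\<close>, only measures in a sublevel set \<open>{\<alpha> \<le> R}\<close> matter: \<psi> is finite, and it is increasing
  and convex as a supremum of affine functionals. For \<open>X\<^sub>n \<down> X\<close>, dominated convergence gives
  \<open>\<langle>X\<^sub>n,\<mu>\<rangle> \<down> \<langle>X,\<mu>\<rangle>\<close> for every \<mu>. If X is continuous, the weakly open sets
  \<open>{\<mu>. \<langle>X\<^sub>n - X,\<mu>\<rangle> < \<epsilon>}\<close> increase and cover the compact closure of the sublevel set, so one of them
  contains it (Dini). If the sublevel sets are compact, they are closed because \<open>C_Z\<close> separates measures,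
  so \<alpha> is lower semicontinuous; the near-maximisers of \<open>\<langle>X\<^sub>n,\<mu>\<rangle> - \<alpha> \<mu>\<close> in \<open>{\<alpha> \<le> R}\<close> then form a
  decreasing sequence of nonempty compact sets, and a common point is a maximiser for X. Every
  \<open>X \<in> U_Z\<close> is such a limit: multiply the Lipschitz majorants of the upper semicontinuous X/Z by Z.\<close>

lemma compactin_incseq_openin_cover:
  assumes "compactin X K" and "\<And>n. openin X (U n)" and "incseq U" and "K \<subseteq> (\<Union>n. U n)"
  shows "\<exists>n. K \<subseteq> U n"
proof -
  obtain \<F> where \<F>: "finite \<F>" "\<F> \<subseteq> range U" "K \<subseteq> \<Union>\<F>"
    using assms(1,2,4) unfolding compactin_def by (metis (no_types, lifting) rangeE)
  obtain N where "finite N" "\<F> = U ` N"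
    using finite_subset_image[OF \<F>(1,2)] by blast
  moreover obtain n where "\<forall>m\<in>N. m \<le> n"
    using \<open>finite N\<close> finite_nat_set_iff_bounded_le by blast
  ultimately have "\<Union>\<F> \<subseteq> U n"
    using \<open>incseq U\<close> by (auto simp: incseq_def)
  then show ?thesis using \<F>(3) by blast
qed

lemma compactin_decseq_closedin_Inter:
  assumes "compactin X K" and "\<And>n. closedin X (C n)" and "\<And>n. C n \<subseteq> K"
    and "\<And>n. C n \<noteq> {}" and "decseq C"
  shows "(\<Inter>n. C n) \<noteq> {}"
proof (rule compact_space_imp_nest[OF compact_space_subtopology[OF assms(1)]])
  show "closedin (subtopology X K) (C n)" for n
    using assms(2,3) by (auto simp: closedin_subtopology)
qed (use assms in auto)

lemma sets_restrict_borel_closed: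
  "sets (restrict_space borel \<Omega>) = sigma_sets \<Omega> {C \<inter> \<Omega> | C. closed C}"
proof -
  have "sets (restrict_space borel \<Omega>) = {C \<inter> \<Omega> | C. C \<in> sigma_sets UNIV (Collect closed)}"
    by (auto simp: sets_restrict_space borel_eq_closed)
  also have "\<dots> = sigma_sets \<Omega> {C \<inter> \<Omega> | C. closed C}"
    using sigma_sets_vimage_commute[of id \<Omega> UNIV "Collect closed"] by simp
  finally show ?thesis .
qed

lemma tendsto_infdist_cutoff_indicator:
  fixes x :: "'a::metric_space"
  assumes "closed C" and "C \<noteq> {}"
  shows "(\<lambda>k. max 0 (1 - real k * infdist x C)) \<longlonglongrightarrow> indicator C x"
proof (cases "x \<in> C")
  case False
  then have d: "infdist x C > 0"
    using in_closed_iff_infdist_zero[OF assms] infdist_nonneg[of x C] by auto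
  obtain N :: nat where N: "1 / infdist x C < real N"
    using reals_Archimedean2 by blast
  have "max 0 (1 - real k * infdist x C) = 0" if "N \<le> k" for k
  proof -
    have "1 / infdist x C < real k" using N that by linarith
    then show ?thesis using d by (simp add: divide_less_eq)
  qed
  then have "eventually (\<lambda>k. max 0 (1 - real k * infdist x C) = 0) sequentially"
    by (auto simp: eventually_sequentially)
  then show ?thesis
    using False by (simp add: tendsto_eventually)
qed simp

lemma usc_on_ball:
  assumes "usc_on \<Omega> Y" and "x \<in> \<Omega>" and "Y x < a"
  shows "\<exists>\<delta>>0. \<forall>y\<in>\<Omega>. dist y x < \<delta> \<longrightarrow> Y y < a"
proof -
  have "openin (top_of_set \<Omega>) {y\<in>\<Omega>. Y y < a}"
    using assms(1) by (simp add: usc_on_def)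
  then obtain \<delta> where "\<delta> > 0" "ball x \<delta> \<inter> \<Omega> \<subseteq> {y\<in>\<Omega>. Y y < a}"
    using assms(2,3) unfolding openin_contains_ball by blast
  then show ?thesis by (intro exI[of _ \<delta>]) (auto simp: dist_commute subset_iff)
qed

lemma usc_on_divide:
  fixes X Z :: "'a::topological_space \<Rightarrow> real"
  assumes "usc_on \<Omega> X" and "continuous_on \<Omega> Z" and "\<And>x. x \<in> \<Omega> \<Longrightarrow> Z x > 0"
  shows "usc_on \<Omega> (\<lambda>x. X x / Z x)"
  unfolding usc_on_def
proof (intro allI openin_subopen[THEN iffD2] ballI)
  fix a x assume x: "x \<in> {y\<in>\<Omega>. X y / Z y < a}"
  then have Zx: "Z x > 0" using assms(3) by auto
  \<comment> \<open>near x, both \<open>X y < b\<close> and \<open>b / Z y < a\<close>, which force \<open>X y / Z y < a\<close>\<close>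
  define b where "b = (X x + a * Z x) / 2"
  have "X x < b" "b / Z x < a"
    using x Zx by (auto simp: b_def field_simps)
  have "openin (top_of_set \<Omega>) {y\<in>\<Omega>. X y < b}"
    using assms(1) by (simp add: usc_on_def)
  moreover have "openin (top_of_set \<Omega>) (\<Omega> \<inter> (\<lambda>y. b / Z y) -` {..<a})"
    using assms(2,3) by (intro continuous_openin_preimage_gen continuous_on_divide continuous_on_const)
      (auto dest: assms(3))
  ultimately have "openin (top_of_set \<Omega>) ({y\<in>\<Omega>. X y < b} \<inter> (\<Omega> \<inter> (\<lambda>y. b / Z y) -` {..<a}))"
    by (rule openin_Int)
  moreover have "X y / Z y < a" if "y \<in> \<Omega>" "X y < b" "b / Z y < a" for y
    using that assms(3)[of y] divide_strict_right_mono[of "X y" b "Z y"] by linarith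
  ultimately show "\<exists>T. openin (top_of_set \<Omega>) T \<and> x \<in> T \<and> T \<subseteq> {y\<in>\<Omega>. X y / Z y < a}"
    using x \<open>X x < b\<close> \<open>b / Z x < a\<close> by (intro exI[of _ "_ \<inter> _"]) auto
qed

definition lipschitz_majorant :: "'a::metric_space set \<Rightarrow> real \<Rightarrow> ('a \<Rightarrow> real) \<Rightarrow> 'a \<Rightarrow> real" where
  "lipschitz_majorant \<Omega> L Y x = (SUP y\<in>\<Omega>. Y y - L * dist x y)"

context
  fixes \<Omega> :: "'a::metric_space set" and Y :: "'a \<Rightarrow> real" and c L :: real
  assumes nonempty: "\<Omega> \<noteq> {}" and bounded_above: "\<And>y. y \<in> \<Omega> \<Longrightarrow> Y y \<le> c" and L_nonneg: "0 \<le> L"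
begin

lemma lipschitz_majorant_summand_le: "y \<in> \<Omega> \<Longrightarrow> Y y - L * dist x y \<le> c"
  using bounded_above[of y] mult_nonneg_nonneg[OF L_nonneg zero_le_dist[of x y]] by linarith

lemma bdd_above_lipschitz_majorant: "bdd_above ((\<lambda>y. Y y - L * dist x y) ` \<Omega>)"
  using lipschitz_majorant_summand_le by (rule bdd_aboveI2)

lemma lipschitz_majorant_le: "lipschitz_majorant \<Omega> L Y x \<le> c"
  unfolding lipschitz_majorant_def using nonempty lipschitz_majorant_summand_le by (rule cSUP_least)

lemma lipschitz_majorant_ge: "x \<in> \<Omega> \<Longrightarrow> Y x \<le> lipschitz_majorant \<Omega> L Y x"
  unfolding lipschitz_majorant_def
  using cSUP_upper[OF _ bdd_above_lipschitz_majorant, of x x] by simp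

lemma lipschitz_majorant_antimono:
  assumes "L \<le> L'" shows "lipschitz_majorant \<Omega> L' Y x \<le> lipschitz_majorant \<Omega> L Y x"
  unfolding lipschitz_majorant_def
proof (rule cSUP_mono[OF nonempty bdd_above_lipschitz_majorant])
  show "\<exists>y'\<in>\<Omega>. Y y - L' * dist x y \<le> Y y' - L * dist x y'" if "y \<in> \<Omega>" for y
    using that assms mult_right_mono[OF assms zero_le_dist[of x y]] by force
qed

lemma lipschitz_majorant_lipschitz: "L-lipschitz_on UNIV (lipschitz_majorant \<Omega> L Y)"
proof (rule lipschitz_onI[OF _ L_nonneg])
  have le: "lipschitz_majorant \<Omega> L Y x \<le> lipschitz_majorant \<Omega> L Y x' + L * dist x x'" for x x'
    unfolding lipschitz_majorant_def
  proof (rule cSUP_least[OF nonempty])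
    fix y assume y: "y \<in> \<Omega>"
    have "L * dist x' y \<le> L * dist x y + L * dist x x'"
      using dist_triangle[of x' y x] L_nonneg by (simp add: dist_commute distrib_left[symmetric] mult_left_mono)
    then have "Y y - L * dist x y \<le> (Y y - L * dist x' y) + L * dist x x'" by linarith
    also have "\<dots> \<le> (SUP y\<in>\<Omega>. Y y - L * dist x' y) + L * dist x x'"
      using cSUP_upper[OF y bdd_above_lipschitz_majorant] by simp
    finally show "Y y - L * dist x y \<le> (SUP y\<in>\<Omega>. Y y - L * dist x' y) + L * dist x x'" .
  qed
  show "dist (lipschitz_majorant \<Omega> L Y x) (lipschitz_majorant \<Omega> L Y x') \<le> L * dist x x'" for x x'
    using le[of x x'] le[of x' x] by (simp add: dist_real_def dist_commute abs_le_iff)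
qed

end

text \<open>Baire's approximation of an upper semicontinuous function by Lipschitz functions.\<close>

lemma lipschitz_majorant_tendsto:
  assumes "usc_on \<Omega> Y" and "\<And>y. y \<in> \<Omega> \<Longrightarrow> \<bar>Y y\<bar> \<le> c" and "x \<in> \<Omega>"
  shows "(\<lambda>n. lipschitz_majorant \<Omega> (real n) Y x) \<longlonglongrightarrow> Y x"
proof (rule LIMSEQ_I)
  have ne: "\<Omega> \<noteq> {}" using assms(3) by blast
  have bounded: "-c \<le> Y y \<and> Y y \<le> c" if "y \<in> \<Omega>" for y
    using assms(2)[OF that] unfolding abs_le_iff by linarith
  fix r :: real assume r: "r > 0"
  obtain \<delta> where \<delta>: "\<delta> > 0" "\<And>y. y \<in> \<Omega> \<Longrightarrow> dist y x < \<delta> \<Longrightarrow> Y y < Y x + r / 2"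
    using usc_on_ball[OF assms(1,3), of "Y x + r / 2"] r by auto
  obtain N :: nat where N: "(c - Y x) / \<delta> < real N"
    using reals_Archimedean2 by blast
  have "norm (lipschitz_majorant \<Omega> (real n) Y x - Y x) < r" if n: "N \<le> n" for n
  proof -
    have "lipschitz_majorant \<Omega> (real n) Y x \<le> Y x + r / 2"
      unfolding lipschitz_majorant_def
    proof (rule cSUP_least[OF ne])
      fix y assume y: "y \<in> \<Omega>"
      show "Y y - real n * dist x y \<le> Y x + r / 2"
      proof (cases "dist y x < \<delta>")
        case True
        then show ?thesis
          using \<delta>(2)[OF y] mult_nonneg_nonneg[OF of_nat_0_le_iff[of n] zero_le_dist[of x y]] by linarith
      next
        case False
        have "c - Y x < real N * \<delta>" using N \<delta>(1) by (simp add: divide_less_eq)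
        also have "\<dots> \<le> real n * dist x y"
          using False n \<delta>(1) by (intro mult_mono) (auto simp: dist_commute)
        finally show ?thesis using bounded[OF y] r by simp
      qed
    qed
    moreover have "Y x \<le> lipschitz_majorant \<Omega> (real n) Y x"
      using lipschitz_majorant_ge[OF ne, of Y c "real n"] bounded assms(3) by simp
    ultimately show ?thesis using r by simp
  qed
  then show "\<exists>N. \<forall>n\<ge>N. norm (lipschitz_majorant \<Omega> (real n) Y x - Y x) < r" by blast
qed

locale weight_function =
  fixes \<Omega> :: "'a::metric_space set" and Z :: "'a \<Rightarrow> real"
  assumes continuous_Z: "continuous_on \<Omega> Z"
    and Z_ge_1: "\<And>\<omega>. \<omega> \<in> \<Omega> \<Longrightarrow> 1 \<le> Z \<omega>"
begin

abbreviation "M \<equiv> ca_Z \<Omega> Z"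

lemma sets_ca_Z: "\<mu> \<in> M \<Longrightarrow> sets \<mu> = sets (restrict_space borel \<Omega>)"
  by (simp add: ca_Z_def)

lemma space_ca_Z: "\<mu> \<in> M \<Longrightarrow> space \<mu> = \<Omega>"
  using sets_eq_imp_space_eq[OF sets_ca_Z] by (simp add: space_restrict_space)

lemma measurable_ca_Z:
  "f \<in> borel_measurable (restrict_space borel \<Omega>) \<Longrightarrow> \<mu> \<in> M \<Longrightarrow> f \<in> borel_measurable \<mu>"
  using measurable_cong_sets[OF sets_ca_Z refl] by blast

lemma integrable_Z: assumes "\<mu> \<in> M" shows "integrable \<mu> Z"
proof -
  have "(\<integral>\<^sup>+x. norm (Z x) \<partial>\<mu>) = (\<integral>\<^sup>+x. ennreal (Z x) \<partial>\<mu>)"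
    using Z_ge_1 space_ca_Z[OF assms] by (intro nn_integral_cong) force
  also have "\<dots> < \<infinity>" using assms by (simp add: ca_Z_def)
  finally show ?thesis
    using measurable_ca_Z[OF borel_measurable_continuous_on_restrict[OF continuous_Z] assms]
    by (simp add: integrable_iff_bounded)
qed

lemma finite_measure_ca_Z: assumes "\<mu> \<in> M" shows "finite_measure \<mu>"
proof
  have "emeasure \<mu> (space \<mu>) = (\<integral>\<^sup>+x. indicator (space \<mu>) x \<partial>\<mu>)" by simp
  also have "\<dots> \<le> (\<integral>\<^sup>+x. ennreal (Z x) \<partial>\<mu>)"
    using Z_ge_1 space_ca_Z[OF assms] by (intro nn_integral_mono) (auto simp: indicator_def)
  also have "\<dots> < \<infinity>" using assms by (simp add: ca_Z_def)
  finally show "emeasure \<mu> (space \<mu>) \<noteq> \<infinity>" by simp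
qed

lemma B_Z_measurable: "X \<in> B_Z \<Omega> Z \<Longrightarrow> X \<in> borel_measurable (restrict_space borel \<Omega>)"
  by (simp add: B_Z_def)

lemma B_Z_dominated:
  assumes "X \<in> B_Z \<Omega> Z" obtains c where "c \<ge> 0" "\<And>\<omega>. \<omega> \<in> \<Omega> \<Longrightarrow> \<bar>X \<omega>\<bar> \<le> c * Z \<omega>"
proof -
  obtain c where c: "\<And>\<omega>. \<omega> \<in> \<Omega> \<Longrightarrow> \<bar>X \<omega> / Z \<omega>\<bar> \<le> c" using assms by (auto simp: B_Z_def)
  show thesis
  proof (rule that[of "max c 0"])
    show "\<bar>X \<omega>\<bar> \<le> max c 0 * Z \<omega>" if "\<omega> \<in> \<Omega>" for \<omega>
    proof -
      have "\<bar>X \<omega>\<bar> \<le> c * Z \<omega>"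
        using c[OF that] Z_ge_1[OF that] by (simp add: abs_div divide_le_eq)
      also have "\<dots> \<le> max c 0 * Z \<omega>" using Z_ge_1[OF that] by (intro mult_right_mono) auto
      finally show ?thesis .
    qed
  qed simp
qed

lemma C_Z_I:
  assumes "continuous_on \<Omega> X" and "\<And>\<omega>. \<omega> \<in> \<Omega> \<Longrightarrow> \<bar>X \<omega>\<bar> \<le> c * Z \<omega>"
  shows "X \<in> C_Z \<Omega> Z"
proof -
  have "\<bar>X \<omega> / Z \<omega>\<bar> \<le> c" if "\<omega> \<in> \<Omega>" for \<omega>
    using assms(2)[OF that] Z_ge_1[OF that] by (simp add: abs_div divide_le_eq)
  then show ?thesis
    using assms(1) borel_measurable_continuous_on_restrict[OF assms(1)] by (auto simp: C_Z_def B_Z_def)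
qed

lemma C_Z_subset_B_Z: "C_Z \<Omega> Z \<subseteq> B_Z \<Omega> Z" and U_Z_subset_B_Z: "U_Z \<Omega> Z \<subseteq> B_Z \<Omega> Z"
  by (auto simp: C_Z_def U_Z_def)

lemma scaled_Z_in_C_Z: "(\<lambda>\<omega>. c * Z \<omega>) \<in> C_Z \<Omega> Z"
  using Z_ge_1 by (intro C_Z_I[of _ "\<bar>c\<bar>"] continuous_on_mult continuous_on_const continuous_Z)
    (force simp: abs_mult)

lemma diff_in_C_Z: "X \<in> C_Z \<Omega> Z \<Longrightarrow> Y \<in> C_Z \<Omega> Z \<Longrightarrow> (\<lambda>\<omega>. X \<omega> - Y \<omega>) \<in> C_Z \<Omega> Z"
proof -
  assume X: "X \<in> C_Z \<Omega> Z" and Y: "Y \<in> C_Z \<Omega> Z"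
  obtain c d where "\<And>\<omega>. \<omega> \<in> \<Omega> \<Longrightarrow> \<bar>X \<omega>\<bar> \<le> c * Z \<omega>" "\<And>\<omega>. \<omega> \<in> \<Omega> \<Longrightarrow> \<bar>Y \<omega>\<bar> \<le> d * Z \<omega>"
    using B_Z_dominated X Y C_Z_subset_B_Z by (metis subsetD)
  then show ?thesis
    using X Y by (intro C_Z_I[of _ "c + d"] continuous_on_diff)
      (auto simp: C_Z_def distrib_right intro: abs_triangle_ineq4[THEN order_trans] add_mono)
qed

lemma integrable_B_Z: assumes "X \<in> B_Z \<Omega> Z" "\<mu> \<in> M" shows "integrable \<mu> X"
proof -
  obtain c where c: "\<And>\<omega>. \<omega> \<in> \<Omega> \<Longrightarrow> \<bar>X \<omega>\<bar> \<le> c * Z \<omega>" using B_Z_dominated[OF assms(1)] by blast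
  show ?thesis
  proof (rule Bochner_Integration.integrable_bound)
    show "integrable \<mu> (\<lambda>\<omega>. c * Z \<omega>)" using integrable_Z[OF assms(2)] by simp
    show "X \<in> borel_measurable \<mu>" using measurable_ca_Z[OF B_Z_measurable[OF assms(1)] assms(2)] .
    show "AE \<omega> in \<mu>. norm (X \<omega>) \<le> norm (c * Z \<omega>)"
      using c space_ca_Z[OF assms(2)] by (intro AE_I2) fastforce
  qed
qed

lemma integral_mono_B_Z:
  "X \<in> B_Z \<Omega> Z \<Longrightarrow> Y \<in> B_Z \<Omega> Z \<Longrightarrow> \<mu> \<in> M \<Longrightarrow> (\<And>\<omega>. \<omega> \<in> \<Omega> \<Longrightarrow> X \<omega> \<le> Y \<omega>) \<Longrightarrow>
    (\<integral>\<omega>. X \<omega> \<partial>\<mu>) \<le> (\<integral>\<omega>. Y \<omega> \<partial>\<mu>)"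
  using integrable_B_Z space_ca_Z by (intro integral_mono) auto

lemma integral_le_scaled_Z:
  "X \<in> B_Z \<Omega> Z \<Longrightarrow> \<mu> \<in> M \<Longrightarrow> (\<And>\<omega>. \<omega> \<in> \<Omega> \<Longrightarrow> X \<omega> \<le> c * Z \<omega>) \<Longrightarrow>
    (\<integral>\<omega>. X \<omega> \<partial>\<mu>) \<le> c * (\<integral>\<omega>. Z \<omega> \<partial>\<mu>)"
  using integral_mono_B_Z[of X "\<lambda>\<omega>. c * Z \<omega>"] scaled_Z_in_C_Z C_Z_subset_B_Z by auto

lemma topspace_weak_top: "topspace (weak_top \<Omega> Z) = M"
proof -
  have "M \<in> {{\<mu> \<in> M. (\<integral>\<omega>. X \<omega> \<partial>\<mu>) \<in> U} | X U. X \<in> C_Z \<Omega> Z \<and> open U}"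
    using scaled_Z_in_C_Z[of 0] by (intro CollectI exI[of _ "\<lambda>_. 0"] exI[of _ UNIV]) auto
  then show ?thesis unfolding weak_top_def topology_generated_by_topspace by blast
qed

lemma openin_weak_top:
  "X \<in> C_Z \<Omega> Z \<Longrightarrow> open U \<Longrightarrow> openin (weak_top \<Omega> Z) {\<mu> \<in> M. (\<integral>\<omega>. X \<omega> \<partial>\<mu>) \<in> U}"
  unfolding weak_top_def by (rule topology_generated_by_Basis) blast

lemma emeasure_closed_eq_if_integrals_eq:
  assumes \<mu>: "\<mu> \<in> M" and \<nu>: "\<nu> \<in> M"
    and eq: "\<And>X. X \<in> C_Z \<Omega> Z \<Longrightarrow> (\<integral>\<omega>. X \<omega> \<partial>\<mu>) = (\<integral>\<omega>. X \<omega> \<partial>\<nu>)" and "closed C"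
  shows "emeasure \<mu> (C \<inter> \<Omega>) = emeasure \<nu> (C \<inter> \<Omega>)"
proof (cases "C = {}")
  case False
  define f where "f k \<omega> = max 0 (1 - real k * infdist \<omega> C)" for k \<omega>
  have f_bounds: "0 \<le> f k \<omega> \<and> f k \<omega> \<le> 1" for k \<omega>
    unfolding f_def using infdist_nonneg[of \<omega> C] by (simp add: mult_nonneg_nonneg)
  have f_C_Z: "f k \<in> C_Z \<Omega> Z" for k
  proof (rule C_Z_I[of _ 1])
    show "continuous_on \<Omega> (f k)" unfolding f_def by (intro continuous_intros)
    show "\<bar>f k \<omega>\<bar> \<le> 1 * Z \<omega>" if "\<omega> \<in> \<Omega>" for \<omega>
      using f_bounds[of k \<omega>] Z_ge_1[OF that] by simp
  qed
  have lim: "(\<lambda>k. \<integral>\<omega>. f k \<omega> \<partial>\<rho>) \<longlonglongrightarrow> measure \<rho> (C \<inter> \<Omega>)" if \<rho>: "\<rho> \<in> M" for \<rho>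
  proof -
    interpret finite_measure \<rho> using finite_measure_ca_Z[OF \<rho>] .
    have "(\<lambda>k. \<integral>\<omega>. f k \<omega> \<partial>\<rho>) \<longlonglongrightarrow> (\<integral>\<omega>. indicator C \<omega> \<partial>\<rho>)"
    proof (rule integral_dominated_convergence[where w="\<lambda>_. 1"])
      show "indicator C \<in> borel_measurable \<rho>"
        using measurable_ca_Z[OF measurable_restrict_space1 \<rho>] borel_closed[OF \<open>closed C\<close>]
          borel_measurable_indicator by blast
      show "f k \<in> borel_measurable \<rho>" for k
        using measurable_ca_Z[OF B_Z_measurable \<rho>] f_C_Z C_Z_subset_B_Z by blast
      show "AE \<omega> in \<rho>. (\<lambda>k. f k \<omega>) \<longlonglongrightarrow> indicator C \<omega>"
        unfolding f_def using tendsto_infdist_cutoff_indicator[OF \<open>closed C\<close> False] by simp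
      show "AE \<omega> in \<rho>. norm (f k \<omega>) \<le> 1" for k
        using f_bounds by simp
    qed simp
    also have "(\<integral>\<omega>. indicator C \<omega> \<partial>\<rho>) = measure \<rho> (C \<inter> \<Omega>)"
      using space_ca_Z[OF \<rho>] by (simp add: measure_restricted[symmetric] Int_commute)
    finally show ?thesis .
  qed
  have "measure \<mu> (C \<inter> \<Omega>) = measure \<nu> (C \<inter> \<Omega>)"
  proof (rule LIMSEQ_unique[OF lim[OF \<mu>]])
    show "(\<lambda>k. \<integral>\<omega>. f k \<omega> \<partial>\<mu>) \<longlonglongrightarrow> measure \<nu> (C \<inter> \<Omega>)"
      using lim[OF \<nu>] eq[OF f_C_Z] by simp
  qed
  then show ?thesis
    using finite_measure.emeasure_eq_measure[OF finite_measure_ca_Z[OF \<mu>]]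
      finite_measure.emeasure_eq_measure[OF finite_measure_ca_Z[OF \<nu>]] by simp
qed simp

lemma ca_Z_eqI:
  assumes \<mu>: "\<mu> \<in> M" and \<nu>: "\<nu> \<in> M"
    and eq: "\<And>X. X \<in> C_Z \<Omega> Z \<Longrightarrow> (\<integral>\<omega>. X \<omega> \<partial>\<mu>) = (\<integral>\<omega>. X \<omega> \<partial>\<nu>)"
  shows "\<mu> = \<nu>"
proof (rule measure_eqI_generator_eq[where E="{C \<inter> \<Omega> | C. closed C}" and \<Omega>=\<Omega> and A="\<lambda>_. \<Omega>"])
  show "Int_stable {C \<inter> \<Omega> | C. closed C}"
  proof (rule Int_stableI)
    fix a b assume "a \<in> {C \<inter> \<Omega> | C. closed C}" "b \<in> {C \<inter> \<Omega> | C. closed C}"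
    then obtain C C' where "closed C" "closed C'" "a = C \<inter> \<Omega>" "b = C' \<inter> \<Omega>" by blast
    then show "a \<inter> b \<in> {C \<inter> \<Omega> | C. closed C}"
      by (intro CollectI exI[of _ "C \<inter> C'"]) auto
  qed
  show "sets \<mu> = sigma_sets \<Omega> {C \<inter> \<Omega> | C. closed C}" "sets \<nu> = sigma_sets \<Omega> {C \<inter> \<Omega> | C. closed C}"
    using sets_ca_Z[OF \<mu>] sets_ca_Z[OF \<nu>] sets_restrict_borel_closed by simp_all
  show "range (\<lambda>_. \<Omega>) \<subseteq> {C \<inter> \<Omega> | C. closed C}"
    by (auto intro!: exI[of _ UNIV])
  show "emeasure \<mu> \<Omega> \<noteq> \<infinity>"
    using finite_measure.emeasure_finite[OF finite_measure_ca_Z[OF \<mu>]] by simp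
  show "{C \<inter> \<Omega> | C. closed C} \<subseteq> Pow \<Omega>" by blast
  show "emeasure \<mu> E = emeasure \<nu> E" if "E \<in> {C \<inter> \<Omega> | C. closed C}" for E
    using that emeasure_closed_eq_if_integrals_eq[OF \<mu> \<nu> eq] by blast
qed simp

lemma Hausdorff_weak_top: "Hausdorff_space (weak_top \<Omega> Z)"
  unfolding Hausdorff_space_def topspace_weak_top
proof (intro allI impI, elim conjE)
  fix \<mu> \<nu> assume "\<mu> \<in> M" "\<nu> \<in> M" "\<mu> \<noteq> \<nu>"
  then obtain X where X: "X \<in> C_Z \<Omega> Z" and ne: "(\<integral>\<omega>. X \<omega> \<partial>\<mu>) \<noteq> (\<integral>\<omega>. X \<omega> \<partial>\<nu>)"
    using ca_Z_eqI by blast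
  obtain U V where "open U" "open V" "(\<integral>\<omega>. X \<omega> \<partial>\<mu>) \<in> U" "(\<integral>\<omega>. X \<omega> \<partial>\<nu>) \<in> V" "U \<inter> V = {}"
    using hausdorff[OF ne] by blast
  then show "\<exists>U V. openin (weak_top \<Omega> Z) U \<and> openin (weak_top \<Omega> Z) V \<and> \<mu> \<in> U \<and> \<nu> \<in> V \<and> disjnt U V"
    using \<open>\<mu> \<in> M\<close> \<open>\<nu> \<in> M\<close> openin_weak_top[OF X]
    by (intro exI[of _ "{\<rho> \<in> M. (\<integral>\<omega>. X \<omega> \<partial>\<rho>) \<in> U}"] exI[of _ "{\<rho> \<in> M. (\<integral>\<omega>. X \<omega> \<partial>\<rho>) \<in> V}"])
      (auto simp: disjnt_def)
qed

lemma U_Z_decreasing_approximation: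
  assumes "X \<in> U_Z \<Omega> Z"
  obtains Xs where "\<And>n. Xs n \<in> C_Z \<Omega> Z" "\<And>\<omega> n. \<omega> \<in> \<Omega> \<Longrightarrow> Xs (Suc n) \<omega> \<le> Xs n \<omega>"
    "\<And>\<omega>. \<omega> \<in> \<Omega> \<Longrightarrow> (\<lambda>n. Xs n \<omega>) \<longlonglongrightarrow> X \<omega>"
proof -
  define Y where "Y \<omega> = X \<omega> / Z \<omega>" for \<omega>
  obtain c where c: "\<And>\<omega>. \<omega> \<in> \<Omega> \<Longrightarrow> \<bar>Y \<omega>\<bar> \<le> c"
    using assms by (auto simp: U_Z_def B_Z_def Y_def)
  have usc: "usc_on \<Omega> Y"
    unfolding Y_def using assms continuous_Z Z_ge_1
    by (intro usc_on_divide) (auto simp: U_Z_def intro: less_le_trans[OF zero_less_one])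
  define Ys where "Ys n = lipschitz_majorant \<Omega> (real n) Y" for n
  have Ys_bounds: "\<bar>Ys n \<omega>\<bar> \<le> c" if "\<omega> \<in> \<Omega>" for n \<omega>
  proof -
    have "Y \<omega> \<le> Ys n \<omega>" "Ys n \<omega> \<le> c"
      unfolding Ys_def using that c
      by (auto intro!: lipschitz_majorant_ge lipschitz_majorant_le simp: abs_le_iff)
    then show ?thesis using c[OF that] by (simp add: abs_le_iff)
  qed
  have Ys_continuous: "continuous_on \<Omega> (Ys n)" for n
  proof (cases "\<Omega> = {}")
    case False
    then have "(real n)-lipschitz_on UNIV (Ys n)"
      unfolding Ys_def using c by (intro lipschitz_majorant_lipschitz) (auto simp: abs_le_iff)
    then show ?thesis by (meson continuous_on_subset lipschitz_on_continuous_on subset_UNIV)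
  qed simp
  show thesis
  proof (rule that[of "\<lambda>n \<omega>. Ys n \<omega> * Z \<omega>"])
    show "(\<lambda>\<omega>. Ys n \<omega> * Z \<omega>) \<in> C_Z \<Omega> Z" for n
    proof (rule C_Z_I[of _ c])
      show "continuous_on \<Omega> (\<lambda>\<omega>. Ys n \<omega> * Z \<omega>)"
        by (intro continuous_on_mult continuous_Z Ys_continuous)
      show "\<bar>Ys n \<omega> * Z \<omega>\<bar> \<le> c * Z \<omega>" if "\<omega> \<in> \<Omega>" for \<omega>
        using Ys_bounds[OF that] Z_ge_1[OF that] by (simp add: abs_mult mult_right_mono)
    qed
    show "Ys (Suc n) \<omega> * Z \<omega> \<le> Ys n \<omega> * Z \<omega>" if "\<omega> \<in> \<Omega>" for \<omega> n
      unfolding Ys_def using that c Z_ge_1[OF that]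
      by (intro mult_right_mono lipschitz_majorant_antimono) (auto simp: abs_le_iff)
    show "(\<lambda>n. Ys n \<omega> * Z \<omega>) \<longlonglongrightarrow> X \<omega>" if "\<omega> \<in> \<Omega>" for \<omega>
    proof -
      have "X \<omega> = Y \<omega> * Z \<omega>" using Z_ge_1[OF that] by (simp add: Y_def)
      then show ?thesis
        unfolding Ys_def using tendsto_mult_right[OF lipschitz_majorant_tendsto[OF usc c that]] by simp
    qed
  qed
qed

end

locale penalty = weight_function \<Omega> Z for \<Omega> :: "'a::metric_space set" and Z +
  fixes \<alpha> :: "'a measure \<Rightarrow> ereal" and \<phi> :: "real \<Rightarrow> ereal"
  assumes INF_\<alpha>_finite: "(INF \<mu>\<in>ca_Z \<Omega> Z. \<alpha> \<mu>) \<noteq> \<infinity>" "(INF \<mu>\<in>ca_Z \<Omega> Z. \<alpha> \<mu>) \<noteq> -\<infinity>"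
    and \<phi>_superlinear: "((\<lambda>x. \<phi> x / ereal x) \<longlongrightarrow> \<infinity>) at_top"
    and \<phi>_le_\<alpha>: "\<And>\<mu>. \<mu> \<in> ca_Z \<Omega> Z \<Longrightarrow> \<phi> (\<integral>\<omega>. Z \<omega> \<partial>\<mu>) \<le> \<alpha> \<mu>"
begin

abbreviation "objective X \<mu> \<equiv> ereal (\<integral>\<omega>. X \<omega> \<partial>\<mu>) - \<alpha> \<mu>"

lemma \<alpha>_bounded_below: obtains m where "\<And>\<mu>. \<mu> \<in> M \<Longrightarrow> ereal m \<le> \<alpha> \<mu>"
proof -
  have "ereal (real_of_ereal (INF \<mu>\<in>M. \<alpha> \<mu>)) = (INF \<mu>\<in>M. \<alpha> \<mu>)"
    using INF_\<alpha>_finite by (cases "INF \<mu>\<in>M. \<alpha> \<mu>") auto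
  then show thesis using that[of "real_of_ereal (INF \<mu>\<in>M. \<alpha> \<mu>)"] by (metis INF_lower)
qed

lemma \<alpha>_not_MInfty: "\<mu> \<in> M \<Longrightarrow> \<alpha> \<mu> \<noteq> -\<infinity>"
  using \<alpha>_bounded_below by (metis MInfty_neq_ereal(1) ereal_infty_less_eq(2))

lemma ex_\<alpha>_finite: "\<exists>\<mu>\<in>M. \<alpha> \<mu> < \<infinity>"
proof -
  have "(INF \<mu>\<in>M. \<alpha> \<mu>) < \<infinity>" using INF_\<alpha>_finite(1) by (simp add: less_top)
  then show ?thesis unfolding INF_less_iff .
qed

lemma \<phi>_dominates_linear: obtains K where "\<And>x. K \<le> x \<Longrightarrow> ereal (a * x) < \<phi> x"
proof -
  obtain K where K: "\<And>x. K \<le> x \<Longrightarrow> ereal a < \<phi> x / ereal x"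
    using order_tendstoD(1)[OF \<phi>_superlinear, of "ereal a"] by (auto simp: eventually_at_top_linorder)
  have "ereal (a * x) < \<phi> x" if "max K 1 \<le> x" for x
  proof (cases "\<phi> x")
    case (real r)
    then have "a < r / x" using K[of x] that by simp
    then show ?thesis using real that by (simp add: less_divide_eq mult.commute)
  qed (use K[of x] that in auto)
  then show thesis using that[of "max K 1"] by blast
qed

lemma objective_less_if_Z_mass_large:
  assumes "c \<ge> 0"
  obtains K where "\<And>\<mu> X. \<mu> \<in> M \<Longrightarrow> X \<in> B_Z \<Omega> Z \<Longrightarrow> (\<And>\<omega>. \<omega> \<in> \<Omega> \<Longrightarrow> X \<omega> \<le> c * Z \<omega>) \<Longrightarrow>
      K \<le> (\<integral>\<omega>. Z \<omega> \<partial>\<mu>) \<Longrightarrow> objective X \<mu> < ereal t"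
proof -
  obtain K where K: "\<And>x. K \<le> x \<Longrightarrow> ereal ((c + 1) * x) < \<phi> x"
    using \<phi>_dominates_linear by blast
  have "objective X \<mu> < ereal t"
    if \<mu>: "\<mu> \<in> M" and X: "X \<in> B_Z \<Omega> Z" "\<And>\<omega>. \<omega> \<in> \<Omega> \<Longrightarrow> X \<omega> \<le> c * Z \<omega>"
      and large: "max K (\<bar>t\<bar> + 1) \<le> (\<integral>\<omega>. Z \<omega> \<partial>\<mu>)" for \<mu> X
  proof -
    define z where "z = (\<integral>\<omega>. Z \<omega> \<partial>\<mu>)"
    have "(\<integral>\<omega>. X \<omega> \<partial>\<mu>) \<le> c * z"
      unfolding z_def using integral_le_scaled_Z[OF X(1) \<mu> X(2)] .
    moreover have "ereal ((c + 1) * z) < \<alpha> \<mu>"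
      using K[of z] large \<phi>_le_\<alpha>[OF \<mu>] unfolding z_def by (meson max.boundedE order_less_le_trans)
    moreover have "z \<ge> \<bar>t\<bar> + 1" using large unfolding z_def by simp
    ultimately show ?thesis by (cases "\<alpha> \<mu>") (auto simp: algebra_simps)
  qed
  then show thesis using that[of "max K (\<bar>t\<bar> + 1)"] by blast
qed

lemma objective_bounded_above:
  assumes "c \<ge> 0"
  obtains B where "\<And>\<mu> X. \<mu> \<in> M \<Longrightarrow> X \<in> B_Z \<Omega> Z \<Longrightarrow> (\<And>\<omega>. \<omega> \<in> \<Omega> \<Longrightarrow> X \<omega> \<le> c * Z \<omega>) \<Longrightarrow>
      objective X \<mu> \<le> ereal B"
proof -
  obtain K where K: "\<And>\<mu> X. \<mu> \<in> M \<Longrightarrow> X \<in> B_Z \<Omega> Z \<Longrightarrow> (\<And>\<omega>. \<omega> \<in> \<Omega> \<Longrightarrow> X \<omega> \<le> c * Z \<omega>) \<Longrightarrow>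
      K \<le> (\<integral>\<omega>. Z \<omega> \<partial>\<mu>) \<Longrightarrow> objective X \<mu> < ereal 0"
    using objective_less_if_Z_mass_large[OF assms] by blast
  obtain m where m: "\<And>\<mu>. \<mu> \<in> M \<Longrightarrow> ereal m \<le> \<alpha> \<mu>" using \<alpha>_bounded_below by blast
  have "objective X \<mu> \<le> ereal (max 0 (c * K - m))"
    if \<mu>: "\<mu> \<in> M" and X: "X \<in> B_Z \<Omega> Z" "\<And>\<omega>. \<omega> \<in> \<Omega> \<Longrightarrow> X \<omega> \<le> c * Z \<omega>" for \<mu> X
  proof (cases "K \<le> (\<integral>\<omega>. Z \<omega> \<partial>\<mu>)")
    case True
    then show ?thesis using K[OF \<mu> X] by (meson less_imp_le max.cobounded1 ereal_less_eq(3) order_trans)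
  next
    case False
    then have "(\<integral>\<omega>. X \<omega> \<partial>\<mu>) \<le> c * K"
      using integral_le_scaled_Z[OF X(1) \<mu> X(2)] assms
      by (meson less_imp_le mult_left_mono nle_le order_trans)
    then show ?thesis using m[OF \<mu>] by (cases "\<alpha> \<mu>") (auto simp: le_max_iff_disj)
  qed
  then show thesis using that by blast
qed

lemma objective_less_if_penalty_large:
  assumes "c \<ge> 0"
  obtains R where "\<And>\<mu> X. \<mu> \<in> M \<Longrightarrow> X \<in> B_Z \<Omega> Z \<Longrightarrow> (\<And>\<omega>. \<omega> \<in> \<Omega> \<Longrightarrow> X \<omega> \<le> c * Z \<omega>) \<Longrightarrow>
      ereal R < \<alpha> \<mu> \<Longrightarrow> objective X \<mu> < ereal t"
proof -
  obtain K where K: "\<And>\<mu> X. \<mu> \<in> M \<Longrightarrow> X \<in> B_Z \<Omega> Z \<Longrightarrow> (\<And>\<omega>. \<omega> \<in> \<Omega> \<Longrightarrow> X \<omega> \<le> c * Z \<omega>) \<Longrightarrow>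
      K \<le> (\<integral>\<omega>. Z \<omega> \<partial>\<mu>) \<Longrightarrow> objective X \<mu> < ereal t"
    using objective_less_if_Z_mass_large[OF assms] by blast
  have "objective X \<mu> < ereal t"
    if \<mu>: "\<mu> \<in> M" and X: "X \<in> B_Z \<Omega> Z" "\<And>\<omega>. \<omega> \<in> \<Omega> \<Longrightarrow> X \<omega> \<le> c * Z \<omega>"
      and large: "ereal (c * K - t) < \<alpha> \<mu>" for \<mu> X
  proof (cases "K \<le> (\<integral>\<omega>. Z \<omega> \<partial>\<mu>)")
    case False
    then have "(\<integral>\<omega>. X \<omega> \<partial>\<mu>) \<le> c * K"
      using integral_le_scaled_Z[OF X(1) \<mu> X(2)] assms
      by (meson less_imp_le mult_left_mono nle_le order_trans)
    then show ?thesis using large by (cases "\<alpha> \<mu>") auto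
  qed (use K[OF \<mu> X] in blast)
  then show thesis using that by blast
qed

abbreviation "\<psi> \<equiv> psi \<Omega> Z \<alpha>"

lemma objective_le_psi: "\<mu> \<in> M \<Longrightarrow> objective X \<mu> \<le> \<psi> X"
  unfolding psi_def by (rule SUP_upper)

lemma psi_finite: assumes X: "X \<in> B_Z \<Omega> Z" shows "\<psi> X \<noteq> \<infinity>" "\<psi> X \<noteq> -\<infinity>"
proof -
  obtain c where c: "c \<ge> 0" "\<And>\<omega>. \<omega> \<in> \<Omega> \<Longrightarrow> X \<omega> \<le> c * Z \<omega>"
    using B_Z_dominated[OF X] by (metis abs_ge_self order_trans)
  obtain B where "\<And>\<mu>. \<mu> \<in> M \<Longrightarrow> objective X \<mu> \<le> ereal B"
    using objective_bounded_above[OF c(1)] X c(2) by metis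
  then have "\<psi> X \<le> ereal B" unfolding psi_def by (rule SUP_least)
  then show "\<psi> X \<noteq> \<infinity>" by auto
  obtain \<mu> where "\<mu> \<in> M" "\<alpha> \<mu> < \<infinity>" using ex_\<alpha>_finite by blast
  then have "-\<infinity> < objective X \<mu>" using \<alpha>_not_MInfty by (cases "\<alpha> \<mu>") auto
  also have "\<dots> \<le> \<psi> X" using objective_le_psi[OF \<open>\<mu> \<in> M\<close>] .
  finally show "\<psi> X \<noteq> -\<infinity>" by simp
qed

lemma psi_mono:
  assumes "X \<in> B_Z \<Omega> Z" "Y \<in> B_Z \<Omega> Z" "\<And>\<omega>. \<omega> \<in> \<Omega> \<Longrightarrow> Y \<omega> \<le> X \<omega>"
  shows "\<psi> Y \<le> \<psi> X"
  unfolding psi_def using assms integral_mono_B_Z[of Y X]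
  by (intro SUP_mono) (auto intro!: bexI ereal_minus_mono)

lemma psi_convex:
  assumes X: "X \<in> B_Z \<Omega> Z" and Y: "Y \<in> B_Z \<Omega> Z" and l: "0 \<le> l" "l \<le> 1"
  shows "\<psi> (\<lambda>\<omega>. l * X \<omega> + (1 - l) * Y \<omega>) \<le> ereal l * \<psi> X + ereal (1 - l) * \<psi> Y"
proof -
  obtain p q where p: "\<psi> X = ereal p" and q: "\<psi> Y = ereal q"
    using psi_finite[OF X] psi_finite[OF Y] by (metis real_of_ereal.elims)
  have "objective (\<lambda>\<omega>. l * X \<omega> + (1 - l) * Y \<omega>) \<mu> \<le> ereal (l * p + (1 - l) * q)" if \<mu>: "\<mu> \<in> M" for \<mu>
  proof (cases "\<alpha> \<mu>")
    case (real r)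
    have "(\<integral>\<omega>. X \<omega> \<partial>\<mu>) - r \<le> p" "(\<integral>\<omega>. Y \<omega> \<partial>\<mu>) - r \<le> q"
      using objective_le_psi[OF \<mu>, of X] objective_le_psi[OF \<mu>, of Y] p q real by simp_all
    then have "l * ((\<integral>\<omega>. X \<omega> \<partial>\<mu>) - r) + (1 - l) * ((\<integral>\<omega>. Y \<omega> \<partial>\<mu>) - r) \<le> l * p + (1 - l) * q"
      using l by (intro add_mono mult_left_mono) auto
    then show ?thesis
      using real integrable_B_Z[OF X \<mu>] integrable_B_Z[OF Y \<mu>] by (simp add: algebra_simps)
  qed (use \<alpha>_not_MInfty[OF \<mu>] in auto)
  then have "\<psi> (\<lambda>\<omega>. l * X \<omega> + (1 - l) * Y \<omega>) \<le> ereal (l * p + (1 - l) * q)"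
    unfolding psi_def by (rule SUP_least)
  then show ?thesis using p q by simp
qed

lemma closedin_objective_superlevel:
  assumes sublevel_closed: "\<And>a. closedin (weak_top \<Omega> Z) {\<mu>\<in>M. \<alpha> \<mu> \<le> ereal a}"
    and Y: "Y \<in> C_Z \<Omega> Z"
  shows "closedin (weak_top \<Omega> Z) {\<mu>\<in>M. ereal e \<le> objective Y \<mu>}"
proof -
  define U where "U b = {\<mu>\<in>M. (\<integral>\<omega>. Y \<omega> \<partial>\<mu>) \<in> {..<b + e}} \<inter> (M - {\<mu>\<in>M. \<alpha> \<mu> \<le> ereal b})" for b
  have "openin (weak_top \<Omega> Z) (U b)" for b
    unfolding U_def using sublevel_closed[of b]
    by (intro openin_Int openin_weak_top[OF Y]) (auto simp: closedin_def topspace_weak_top)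
  moreover have "M - {\<mu>\<in>M. ereal e \<le> objective Y \<mu>} = (\<Union>b. U b)"
  proof (intro equalityI subsetI)
    fix \<mu> assume "\<mu> \<in> M - {\<mu>\<in>M. ereal e \<le> objective Y \<mu>}"
    then have \<mu>: "\<mu> \<in> M" and less: "objective Y \<mu> < ereal e" by auto
    obtain b where "(\<integral>\<omega>. Y \<omega> \<partial>\<mu>) - e < b" "ereal b < \<alpha> \<mu>"
    proof (cases "\<alpha> \<mu>")
      case (real r)
      then show thesis using less that[of "((\<integral>\<omega>. Y \<omega> \<partial>\<mu>) - e + r) / 2"] by simp
    next
      case PInf
      then show thesis using that[of "(\<integral>\<omega>. Y \<omega> \<partial>\<mu>) - e + 1"] by simp
    qed (use \<alpha>_not_MInfty[OF \<mu>] in simp)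
    then have "\<mu> \<in> U b" using \<mu> unfolding U_def by auto
    then show "\<mu> \<in> (\<Union>b. U b)" by blast
  next
    fix \<mu> assume "\<mu> \<in> (\<Union>b. U b)"
    then obtain b where "\<mu> \<in> M" "(\<integral>\<omega>. Y \<omega> \<partial>\<mu>) < b + e" "ereal b < \<alpha> \<mu>"
      unfolding U_def by auto
    then show "\<mu> \<in> M - {\<mu>\<in>M. ereal e \<le> objective Y \<mu>}"
      by (cases "\<alpha> \<mu>") auto
  qed
  ultimately show ?thesis
    unfolding closedin_def topspace_weak_top by auto
qed

end

locale decreasing_approximation = penalty \<Omega> Z \<alpha> \<phi> for \<Omega> :: "'a::metric_space set" and Z \<alpha> \<phi> +
  fixes Xs :: "nat \<Rightarrow> 'a \<Rightarrow> real" and X :: "'a \<Rightarrow> real"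
  assumes Xs_C_Z: "\<And>n. Xs n \<in> C_Z \<Omega> Z" and X_B_Z: "X \<in> B_Z \<Omega> Z"
    and Xs_decreasing: "\<And>\<omega> n. \<omega> \<in> \<Omega> \<Longrightarrow> Xs (Suc n) \<omega> \<le> Xs n \<omega>"
    and Xs_tendsto: "\<And>\<omega>. \<omega> \<in> \<Omega> \<Longrightarrow> (\<lambda>n. Xs n \<omega>) \<longlonglongrightarrow> X \<omega>"
begin

lemma Xs_B_Z: "Xs n \<in> B_Z \<Omega> Z"
  using Xs_C_Z C_Z_subset_B_Z by blast

lemma Xs_antimono: "\<omega> \<in> \<Omega> \<Longrightarrow> m \<le> n \<Longrightarrow> Xs n \<omega> \<le> Xs m \<omega>"
  using decseqD[OF decseq_SucI, of "\<lambda>n. Xs n \<omega>"] Xs_decreasing by blast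

lemma X_le_Xs: "\<omega> \<in> \<Omega> \<Longrightarrow> X \<omega> \<le> Xs n \<omega>"
  using decseq_ge[OF decseq_SucI Xs_tendsto] Xs_decreasing by blast

lemma integral_Xs_tendsto:
  assumes \<mu>: "\<mu> \<in> M" shows "(\<lambda>n. \<integral>\<omega>. Xs n \<omega> \<partial>\<mu>) \<longlonglongrightarrow> (\<integral>\<omega>. X \<omega> \<partial>\<mu>)"
proof (rule integral_dominated_convergence[where w="\<lambda>\<omega>. \<bar>Xs 0 \<omega>\<bar> + \<bar>X \<omega>\<bar>"])
  show "X \<in> borel_measurable \<mu>" "Xs n \<in> borel_measurable \<mu>" for n
    using measurable_ca_Z[OF B_Z_measurable \<mu>] X_B_Z Xs_B_Z by auto
  show "integrable \<mu> (\<lambda>\<omega>. \<bar>Xs 0 \<omega>\<bar> + \<bar>X \<omega>\<bar>)"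
    using integrable_B_Z[OF Xs_B_Z \<mu>] integrable_B_Z[OF X_B_Z \<mu>] by auto
  show "AE \<omega> in \<mu>. (\<lambda>n. Xs n \<omega>) \<longlonglongrightarrow> X \<omega>"
    using Xs_tendsto space_ca_Z[OF \<mu>] by (intro AE_I2) auto
  show "AE \<omega> in \<mu>. norm (Xs n \<omega>) \<le> \<bar>Xs 0 \<omega>\<bar> + \<bar>X \<omega>\<bar>" for n
    using Xs_antimono[of _ 0 n] X_le_Xs[of _ n] space_ca_Z[OF \<mu>] by (intro AE_I2) fastforce
qed

lemma psi_le_INF_psi_Xs: "\<psi> X \<le> (INF n. \<psi> (Xs n))"
  using psi_mono X_B_Z Xs_B_Z X_le_Xs by (intro INF_greatest) blast

lemma psi_Xs_tendsto_if_INF_le: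
  assumes "(INF n. \<psi> (Xs n)) \<le> \<psi> X"
  shows "decseq (\<lambda>n. \<psi> (Xs n)) \<and> (\<lambda>n. \<psi> (Xs n)) \<longlonglongrightarrow> \<psi> X"
proof
  show dec: "decseq (\<lambda>n. \<psi> (Xs n))"
    using psi_mono Xs_B_Z Xs_antimono unfolding decseq_def by blast
  show "(\<lambda>n. \<psi> (Xs n)) \<longlonglongrightarrow> \<psi> X"
    using LIMSEQ_INF[OF dec] assms psi_le_INF_psi_Xs by simp
qed

lemma objective_Xs_less_if_penalty_large:
  obtains R where "\<And>\<mu> n. \<mu> \<in> M \<Longrightarrow> ereal R < \<alpha> \<mu> \<Longrightarrow> objective (Xs n) \<mu> < ereal t"
proof -
  obtain c where c: "c \<ge> 0" "\<And>\<omega>. \<omega> \<in> \<Omega> \<Longrightarrow> \<bar>Xs 0 \<omega>\<bar> \<le> c * Z \<omega>"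
    using B_Z_dominated[OF Xs_B_Z] by blast
  have "Xs n \<omega> \<le> c * Z \<omega>" if "\<omega> \<in> \<Omega>" for n \<omega>
    using Xs_antimono[OF that, of 0 n] c(2)[OF that] by simp
  then show thesis
    using objective_less_if_penalty_large[OF c(1)] Xs_B_Z that by metis
qed

text \<open>Dini's argument: on a weakly compact set of measures, \<open>\<integral>Xs n d\<mu> \<down> \<integral>X d\<mu>\<close> uniformly.\<close>

lemma integral_Xs_uniformly_close:
  assumes K: "compactin (weak_top \<Omega> Z) K" and X: "X \<in> C_Z \<Omega> Z" and "e > 0"
  obtains N where "\<And>\<mu>. \<mu> \<in> K \<Longrightarrow> (\<integral>\<omega>. Xs N \<omega> \<partial>\<mu>) < (\<integral>\<omega>. X \<omega> \<partial>\<mu>) + e"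
proof -
  define U where "U n = {\<mu>\<in>M. (\<integral>\<omega>. Xs n \<omega> - X \<omega> \<partial>\<mu>) \<in> {..<e}}" for n
  have diff: "(\<integral>\<omega>. Xs n \<omega> - X \<omega> \<partial>\<mu>) = (\<integral>\<omega>. Xs n \<omega> \<partial>\<mu>) - (\<integral>\<omega>. X \<omega> \<partial>\<mu>)" if "\<mu> \<in> M" for n \<mu>
    using integrable_B_Z[OF Xs_B_Z that] integrable_B_Z[OF X_B_Z that] by simp
  have "openin (weak_top \<Omega> Z) (U n)" for n
    unfolding U_def by (intro openin_weak_top diff_in_C_Z Xs_C_Z X) auto
  moreover have "incseq U"
  proof (intro monoI subsetI)
    fix m n \<mu> assume "m \<le> n" "\<mu> \<in> U m"
    then have "\<mu> \<in> M" "(\<integral>\<omega>. Xs n \<omega> \<partial>\<mu>) \<le> (\<integral>\<omega>. Xs m \<omega> \<partial>\<mu>)"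
      using integral_mono_B_Z[OF Xs_B_Z Xs_B_Z] Xs_antimono unfolding U_def by auto
    then show "\<mu> \<in> U n" using \<open>\<mu> \<in> U m\<close> diff unfolding U_def by auto
  qed
  moreover have "K \<subseteq> (\<Union>n. U n)"
  proof
    fix \<mu> assume "\<mu> \<in> K"
    then have \<mu>: "\<mu> \<in> M" using compactin_subset_topspace[OF K] topspace_weak_top by blast
    have "(\<lambda>n. \<integral>\<omega>. Xs n \<omega> - X \<omega> \<partial>\<mu>) \<longlonglongrightarrow> (\<integral>\<omega>. X \<omega> \<partial>\<mu>) - (\<integral>\<omega>. X \<omega> \<partial>\<mu>)"
      unfolding diff[OF \<mu>] by (intro tendsto_diff integral_Xs_tendsto \<mu> tendsto_const)
    then have "eventually (\<lambda>n. (\<integral>\<omega>. Xs n \<omega> - X \<omega> \<partial>\<mu>) < e) sequentially"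
      using \<open>e > 0\<close> by (intro order_tendstoD(2)) auto
    then obtain n where "(\<integral>\<omega>. Xs n \<omega> - X \<omega> \<partial>\<mu>) < e"
      by (auto simp: eventually_sequentially)
    then show "\<mu> \<in> (\<Union>n. U n)" using \<mu> unfolding U_def by auto
  qed
  ultimately obtain N where "K \<subseteq> U N"
    using compactin_incseq_openin_cover[OF K] by metis
  then show thesis using that[of N] diff unfolding U_def by force
qed

lemma INF_psi_Xs_le_if_relatively_compact:
  assumes cpt: "\<And>a. compactin (weak_top \<Omega> Z) (weak_top \<Omega> Z closure_of {\<mu>\<in>M. \<alpha> \<mu> \<le> ereal a})"
    and X: "X \<in> C_Z \<Omega> Z"
  shows "(INF n. \<psi> (Xs n)) \<le> \<psi> X"
proof -
  obtain p where p: "\<psi> X = ereal p" using psi_finite[OF X_B_Z] by (metis real_of_ereal.elims)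
  obtain R where R: "\<And>\<mu> n. \<mu> \<in> M \<Longrightarrow> ereal R < \<alpha> \<mu> \<Longrightarrow> objective (Xs n) \<mu> < ereal (p - 1)"
    using objective_Xs_less_if_penalty_large by blast
  have "(INF n. \<psi> (Xs n)) \<le> ereal p + ereal e" if "e > 0" for e
  proof -
    let ?S = "{\<mu>\<in>M. \<alpha> \<mu> \<le> ereal R}"
    have "?S \<subseteq> weak_top \<Omega> Z closure_of ?S"
      by (intro closure_of_subset) (auto simp: topspace_weak_top)
    moreover obtain N where "\<And>\<mu>. \<mu> \<in> weak_top \<Omega> Z closure_of ?S \<Longrightarrow>
        (\<integral>\<omega>. Xs N \<omega> \<partial>\<mu>) < (\<integral>\<omega>. X \<omega> \<partial>\<mu>) + e"
      using integral_Xs_uniformly_close[OF cpt X \<open>e > 0\<close>] by blast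
    ultimately have N: "\<And>\<mu>. \<mu> \<in> ?S \<Longrightarrow> (\<integral>\<omega>. Xs N \<omega> \<partial>\<mu>) < (\<integral>\<omega>. X \<omega> \<partial>\<mu>) + e"
      by blast
    have "objective (Xs N) \<mu> \<le> ereal (p + e)" if \<mu>: "\<mu> \<in> M" for \<mu>
    proof (cases "ereal R < \<alpha> \<mu>")
      case True
      then have "objective (Xs N) \<mu> < ereal (p - 1)" using R[OF \<mu>] by blast
      also have "\<dots> \<le> ereal (p + e)" using \<open>e > 0\<close> by simp
      finally show ?thesis by simp
    next
      case False
      then obtain r where r: "\<alpha> \<mu> = ereal r" using \<alpha>_not_MInfty[OF \<mu>] by (cases "\<alpha> \<mu>") auto
      have "(\<integral>\<omega>. X \<omega> \<partial>\<mu>) - r \<le> p" using objective_le_psi[OF \<mu>, of X] p r by simp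
      then show ?thesis using N[of \<mu>] False \<mu> r by simp
    qed
    then have "\<psi> (Xs N) \<le> ereal (p + e)" unfolding psi_def by (rule SUP_least)
    then show ?thesis by (simp add: INF_lower2)
  qed
  then show ?thesis using p by (auto intro: ereal_le_epsilon2)
qed

text \<open>With closed sublevel sets, the near-maximisers of \<open>objective (Xs n)\<close> in a fixed sublevel set form
  a decreasing sequence of nonempty compact sets; a common point maximises \<open>objective X\<close>.\<close>

lemma ex_objective_ge_INF_psi_Xs:
  assumes cpt: "\<And>a. compactin (weak_top \<Omega> Z) {\<mu>\<in>M. \<alpha> \<mu> \<le> ereal a}"
  shows "\<exists>\<mu>\<in>M. (INF n. \<psi> (Xs n)) \<le> objective X \<mu>"
proof -
  have closed: "closedin (weak_top \<Omega> Z) {\<mu>\<in>M. \<alpha> \<mu> \<le> ereal a}" for a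
    using compactin_imp_closedin[OF Hausdorff_weak_top cpt] .
  have "\<psi> X \<le> (INF n. \<psi> (Xs n))" "(INF n. \<psi> (Xs n)) \<le> \<psi> (Xs 0)"
    by (simp add: psi_le_INF_psi_Xs) (rule INF_lower, simp)
  then obtain l where l: "(INF n. \<psi> (Xs n)) = ereal l"
    using psi_finite[OF X_B_Z] psi_finite[OF Xs_B_Z, of 0]
    by (cases "INF n. \<psi> (Xs n)") auto
  define e where "e n = l - 1 / (real n + 1)" for n
  obtain R where R: "\<And>\<mu> n. \<mu> \<in> M \<Longrightarrow> ereal R < \<alpha> \<mu> \<Longrightarrow> objective (Xs n) \<mu> < ereal (l - 1)"
    using objective_Xs_less_if_penalty_large by blast
  define G where "G n = {\<mu>\<in>M. \<alpha> \<mu> \<le> ereal R} \<inter> {\<mu>\<in>M. ereal (e n) \<le> objective (Xs n) \<mu>}" for n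
  have "(\<Inter>n. G n) \<noteq> {}"
  proof (rule compactin_decseq_closedin_Inter[OF cpt[of R]])
    show "closedin (weak_top \<Omega> Z) (G n)" for n
      unfolding G_def using closed by (intro closedin_Int closedin_objective_superlevel Xs_C_Z)
    show "G n \<subseteq> {\<mu>\<in>M. \<alpha> \<mu> \<le> ereal R}" for n unfolding G_def by blast
    show "G n \<noteq> {}" for n
    proof -
      have "ereal (e n) < ereal l" unfolding e_def by simp
      also have "\<dots> \<le> \<psi> (Xs n)" using INF_lower[of n UNIV "\<lambda>n. \<psi> (Xs n)"] l by simp
      finally have "ereal (e n) < \<psi> (Xs n)" .
      then obtain \<mu> where \<mu>: "\<mu> \<in> M" "ereal (e n) < objective (Xs n) \<mu>"
        unfolding psi_def less_SUP_iff by blast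
      have "\<not> ereal R < \<alpha> \<mu>"
      proof
        assume "ereal R < \<alpha> \<mu>"
        then have "objective (Xs n) \<mu> < ereal (l - 1)" using R[OF \<mu>(1)] by blast
        also have "\<dots> \<le> ereal (e n)" unfolding e_def by simp
        finally show False using \<mu>(2) by simp
      qed
      then have "\<mu> \<in> G n" using \<mu> unfolding G_def by (auto simp: not_less)
      then show ?thesis by blast
    qed
    show "decseq G"
    proof (rule decseq_SucI, intro subsetI)
      fix n \<mu> assume "\<mu> \<in> G (Suc n)"
      then have \<mu>: "\<mu> \<in> M" "\<alpha> \<mu> \<le> ereal R" "ereal (e (Suc n)) \<le> objective (Xs (Suc n)) \<mu>"
        unfolding G_def by auto
      have "e n \<le> e (Suc n)" unfolding e_def by (simp add: frac_le)
      moreover have "(\<integral>\<omega>. Xs (Suc n) \<omega> \<partial>\<mu>) \<le> (\<integral>\<omega>. Xs n \<omega> \<partial>\<mu>)"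
        using integral_mono_B_Z[OF Xs_B_Z Xs_B_Z \<mu>(1)] Xs_decreasing by blast
      ultimately have "ereal (e n) \<le> objective (Xs n) \<mu>"
        using \<mu>(3) by (meson ereal_less_eq(3) ereal_minus_mono order_refl order_trans)
      then show "\<mu> \<in> G n" using \<mu> unfolding G_def by blast
    qed
  qed
  then obtain \<mu> where \<mu>: "\<mu> \<in> M" "\<alpha> \<mu> \<le> ereal R" and above: "\<And>n. ereal (e n) \<le> objective (Xs n) \<mu>"
    unfolding G_def by blast
  obtain r where r: "\<alpha> \<mu> = ereal r" using \<mu> \<alpha>_not_MInfty by (cases "\<alpha> \<mu>") auto
  have "(\<lambda>n. (\<integral>\<omega>. Xs n \<omega> \<partial>\<mu>) - r) \<longlonglongrightarrow> (\<integral>\<omega>. X \<omega> \<partial>\<mu>) - r"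
    by (intro tendsto_diff integral_Xs_tendsto \<mu>(1) tendsto_const)
  moreover have "e \<longlonglongrightarrow> l - 0"
    unfolding e_def by (intro tendsto_diff tendsto_const LIMSEQ_inverse_real_of_nat_add[THEN
        tendsto_cong[THEN iffD1, rotated]]) (simp add: inverse_eq_divide add.commute)
  ultimately have "l \<le> (\<integral>\<omega>. X \<omega> \<partial>\<mu>) - r"
    using above r by (intro LIMSEQ_le) auto
  then show ?thesis using \<mu>(1) l r by (intro bexI[of _ \<mu>]) auto
qed

end

context penalty
begin

theorem psi_tendsto_of_relatively_compact_sublevels:
  assumes "\<forall>a. compactin (weak_top \<Omega> Z) (weak_top \<Omega> Z closure_of {\<mu>\<in>M. \<alpha> \<mu> \<le> ereal a})"
    and "\<forall>n. Xs n \<in> C_Z \<Omega> Z" "X \<in> C_Z \<Omega> Z" "\<forall>\<omega>\<in>\<Omega>. \<forall>n. Xs (Suc n) \<omega> \<le> Xs n \<omega>"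
    "\<forall>\<omega>\<in>\<Omega>. (\<lambda>n. Xs n \<omega>) \<longlonglongrightarrow> X \<omega>"
  shows "decseq (\<lambda>n. \<psi> (Xs n)) \<and> (\<lambda>n. \<psi> (Xs n)) \<longlonglongrightarrow> \<psi> X"
proof -
  interpret decreasing_approximation \<Omega> Z \<alpha> \<phi> Xs X
    using assms C_Z_subset_B_Z by unfold_locales auto
  show ?thesis
    using assms by (intro psi_Xs_tendsto_if_INF_le INF_psi_Xs_le_if_relatively_compact) auto
qed

theorem psi_tendsto_of_compact_sublevels:
  assumes "\<forall>a. compactin (weak_top \<Omega> Z) {\<mu>\<in>M. \<alpha> \<mu> \<le> ereal a}"
    and "\<forall>n. Xs n \<in> C_Z \<Omega> Z" "X \<in> U_Z \<Omega> Z" "\<forall>\<omega>\<in>\<Omega>. \<forall>n. Xs (Suc n) \<omega> \<le> Xs n \<omega>"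
    "\<forall>\<omega>\<in>\<Omega>. (\<lambda>n. Xs n \<omega>) \<longlonglongrightarrow> X \<omega>"
  shows "decseq (\<lambda>n. \<psi> (Xs n)) \<and> (\<lambda>n. \<psi> (Xs n)) \<longlonglongrightarrow> \<psi> X"
proof -
  interpret decreasing_approximation \<Omega> Z \<alpha> \<phi> Xs X
    using assms U_Z_subset_B_Z by unfold_locales auto
  obtain \<mu> where "\<mu> \<in> M" "(INF n. \<psi> (Xs n)) \<le> objective X \<mu>"
    using ex_objective_ge_INF_psi_Xs assms(1) by blast
  then show ?thesis
    using objective_le_psi by (intro psi_Xs_tendsto_if_INF_le) (blast intro: order_trans)
qed

theorem psi_attained_of_compact_sublevels:
  assumes "\<forall>a. compactin (weak_top \<Omega> Z) {\<mu>\<in>M. \<alpha> \<mu> \<le> ereal a}" and X: "X \<in> U_Z \<Omega> Z"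
  shows "\<exists>\<mu>\<in>M. \<psi> X = objective X \<mu>"
proof -
  obtain Xs where Xs: "\<And>n. Xs n \<in> C_Z \<Omega> Z" "\<And>\<omega> n. \<omega> \<in> \<Omega> \<Longrightarrow> Xs (Suc n) \<omega> \<le> Xs n \<omega>"
    "\<And>\<omega>. \<omega> \<in> \<Omega> \<Longrightarrow> (\<lambda>n. Xs n \<omega>) \<longlonglongrightarrow> X \<omega>"
    using U_Z_decreasing_approximation[OF X] by blast
  interpret decreasing_approximation \<Omega> Z \<alpha> \<phi> Xs X
    using Xs X U_Z_subset_B_Z by unfold_locales auto
  obtain \<mu> where "\<mu> \<in> M" "(INF n. \<psi> (Xs n)) \<le> objective X \<mu>"
    using ex_objective_ge_INF_psi_Xs assms(1) by blast
  then show ?thesis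
    using psi_le_INF_psi_Xs objective_le_psi by (metis antisym order_trans)
qed

end

theorem lemmaA4:
  fixes k0 :: "'k::finite"
    and \<Omega> :: "(real^'k^'t::finite) set"
    and Z :: "real^'k^'t \<Rightarrow> real"
    and \<alpha> :: "(real^'k^'t) measure \<Rightarrow> ereal"
    and \<phi> :: "real \<Rightarrow> ereal"
  assumes \<Omega>_sub: "\<Omega> \<subseteq> state_space k0"
    and \<Omega>_ne: "\<Omega> \<noteq> {}"
    and Z_cont: "continuous_on \<Omega> Z"
    and Z_ge1: "\<forall>\<omega>\<in>\<Omega>. Z \<omega> \<ge> 1"
    and Z_sublevel: "\<forall>z\<ge>0. compact {\<omega>\<in>\<Omega>. Z \<omega> \<le> z}"
    and \<alpha>_not_minf: "\<forall>\<mu>\<in>ca_Z \<Omega> Z. \<alpha> \<mu> \<noteq> -\<infinity>"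
    and \<alpha>_inf_real: "(INF \<mu>\<in>ca_Z \<Omega> Z. \<alpha> \<mu>) \<noteq> \<infinity> \<and> (INF \<mu>\<in>ca_Z \<Omega> Z. \<alpha> \<mu>) \<noteq> -\<infinity>"
    and \<phi>_not_minf: "\<forall>x\<ge>0. \<phi> x \<noteq> -\<infinity>"
    and \<phi>_growth: "((\<lambda>x. \<phi> x / ereal x) \<longlongrightarrow> \<infinity>) at_top"
    and \<alpha>_ge_\<phi>: "\<forall>\<mu>\<in>ca_Z \<Omega> Z. \<alpha> \<mu> \<ge> \<phi> (\<integral>\<omega>. Z \<omega> \<partial>\<mu>)"
  shows
   "(\<forall>X\<in>B_Z \<Omega> Z. psi \<Omega> Z \<alpha> X \<noteq> \<infinity> \<and> psi \<Omega> Z \<alpha> X \<noteq> -\<infinity>)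
    \<and> (\<forall>X\<in>B_Z \<Omega> Z. \<forall>Y\<in>B_Z \<Omega> Z. (\<forall>\<omega>\<in>\<Omega>. X \<omega> \<ge> Y \<omega>) \<longrightarrow> psi \<Omega> Z \<alpha> X \<ge> psi \<Omega> Z \<alpha> Y)
    \<and> (\<forall>X\<in>B_Z \<Omega> Z. \<forall>Y\<in>B_Z \<Omega> Z. \<forall>l::real. 0 \<le> l \<and> l \<le> 1 \<longrightarrow>
         psi \<Omega> Z \<alpha> (\<lambda>\<omega>. l * X \<omega> + (1 - l) * Y \<omega>)
           \<le> ereal l * psi \<Omega> Z \<alpha> X + ereal (1 - l) * psi \<Omega> Z \<alpha> Y)
    \<and> ((\<forall>a::real. compactin (weak_top \<Omega> Z)
           ((weak_top \<Omega> Z) closure_of {\<mu>\<in>ca_Z \<Omega> Z. \<alpha> \<mu> \<le> ereal a})) \<longrightarrow>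
        (\<forall>Xs X. (\<forall>n. Xs n \<in> C_Z \<Omega> Z) \<and> X \<in> C_Z \<Omega> Z
            \<and> (\<forall>\<omega>\<in>\<Omega>. \<forall>n. Xs (Suc n) \<omega> \<le> Xs n \<omega>)
            \<and> (\<forall>\<omega>\<in>\<Omega>. (\<lambda>n. Xs n \<omega>) \<longlonglongrightarrow> X \<omega>)
          \<longrightarrow> decseq (\<lambda>n. psi \<Omega> Z \<alpha> (Xs n))
              \<and> (\<lambda>n. psi \<Omega> Z \<alpha> (Xs n)) \<longlonglongrightarrow> psi \<Omega> Z \<alpha> X))
    \<and> ((\<forall>a::real. compactin (weak_top \<Omega> Z) {\<mu>\<in>ca_Z \<Omega> Z. \<alpha> \<mu> \<le> ereal a}) \<longrightarrow>
        (\<forall>Xs X. (\<forall>n. Xs n \<in> C_Z \<Omega> Z) \<and> X \<in> U_Z \<Omega> Z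
            \<and> (\<forall>\<omega>\<in>\<Omega>. \<forall>n. Xs (Suc n) \<omega> \<le> Xs n \<omega>)
            \<and> (\<forall>\<omega>\<in>\<Omega>. (\<lambda>n. Xs n \<omega>) \<longlonglongrightarrow> X \<omega>)
          \<longrightarrow> decseq (\<lambda>n. psi \<Omega> Z \<alpha> (Xs n))
              \<and> (\<lambda>n. psi \<Omega> Z \<alpha> (Xs n)) \<longlonglongrightarrow> psi \<Omega> Z \<alpha> X)
        \<and> (\<forall>X\<in>U_Z \<Omega> Z. \<exists>\<mu>\<in>ca_Z \<Omega> Z.
              psi \<Omega> Z \<alpha> X = ereal (\<integral>\<omega>. X \<omega> \<partial>\<mu>) - \<alpha> \<mu>))"
proof -
  interpret penalty \<Omega> Z \<alpha> \<phi>
    using Z_cont Z_ge1 \<alpha>_inf_real \<phi>_growth \<alpha>_ge_\<phi> by unfold_locales auto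
  show ?thesis
    using psi_finite psi_mono psi_convex psi_tendsto_of_relatively_compact_sublevels
      psi_tendsto_of_compact_sublevels psi_attained_of_compact_sublevels
    by blast
qed

end
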